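(* Let $n\in\mathbb N$, let $0\le x_0<x_1<\dots<x_n\le1$, let $\nu_1,\dots,\nu_n>0$, let $a_1,\dots,a_n\in(0,1]$, and let $\alpha_0,\dots,\alpha_n>0$. (a) If $x_n-x_0<1$, then there exist a unique $C>0$ and a unique system of points $y_1,\dots,y_n$ with $x_j<y_{j+1}<x_{j+1}$ for $j=0,\dots,n-1$ such that $$S(t):=C\prod_{k=1}^n|\sin(a_k\pi(t-y_k))|^{\nu_k}$$ satisfies $S(x_j)=\alpha_j$ for $j=0,\dots,n$. (b) If moreover $\nu_1,\dots,\nu_n\in\mathbb N$, then for these $y_k$ and $C$ the function $T(t):=C\prod_{k=1}^n\sin^{\nu_k}(a_k\pi(t-y_k))$ satisfies $$T(x_j)=(-1)^{\sum_{k=j+1}^n\nu_k}\alpha_j\quad(j=0,1,\dots,n).$$ (c) If $a_1,\dots,a_n<1$, then the assertions of (a) and (b) remain true without the assumption $x_n-x_0<1$. *)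

theory Defs
  imports Complex_Main
begin

definition S_fun :: "nat \<Rightarrow> real \<Rightarrow> (nat \<Rightarrow> real) \<Rightarrow> (nat \<Rightarrow> real) \<Rightarrow> (nat \<Rightarrow> real) \<Rightarrow> real \<Rightarrow> real" where
  "S_fun n C a nu y t = C * (\<Prod>k = 1..n. \<bar>sin (a k * pi * (t - y k))\<bar> powr nu k)"

definition T_fun :: "nat \<Rightarrow> real \<Rightarrow> (nat \<Rightarrow> real) \<Rightarrow> (nat \<Rightarrow> real) \<Rightarrow> (nat \<Rightarrow> real) \<Rightarrow> real \<Rightarrow> real" where
  "T_fun n C a nu y t = C * (\<Prod>k = 1..n. sin (a k * pi * (t - y k)) ^ nat \<lfloor>nu k\<rfloor>)"

definition is_solution :: "nat \<Rightarrow> (nat \<Rightarrow> real) \<Rightarrow> (nat \<Rightarrow> real) \<Rightarrow> (nat \<Rightarrow> real) \<Rightarrow> (nat \<Rightarrow> real)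
    \<Rightarrow> real \<Rightarrow> (nat \<Rightarrow> real) \<Rightarrow> bool" where
  "is_solution n x a nu alpha C y \<longleftrightarrow>
     C > 0 \<and> (\<forall>j<n. x j < y (j+1) \<and> y (j+1) < x (j+1)) \<and>
     (\<forall>j\<le>n. S_fun n C a nu y (x j) = alpha j)"

end

theory Submission
  imports Defs
begin

(*
  Taking logarithms, with L_j(y) = sum_k nu_k ln|sin(a_k pi (x_j - y_k))| the conditions S(x_j) = alpha_j
  become ln C + L_j(y) = ln alpha_j; eliminating C leaves the n equations
    F_j(y) := L_j(y) - L_(j-1)(y) = ln alpha_j - ln alpha_(j-1),   j = 1..n.
  Either hypothesis of (a) or (c) gives a_k (x_n - x_0) < 1, so every sine argument that occurs lies in
  (0, pi), where cot is strictly decreasing, i.e. ln sin is strictly concave.  Hence F_j is nondecreasing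
  in each y_k with k /= j, strictly decreasing in y_j, and tends to +oo resp. -oo at the two ends of
  (x_(j-1), x_j).  Sub- and supersolutions chosen recursively enclose a box on which the map sending y to
  the solutions of the single equations F_j = const in y_j is monotone; its Knaster-Tarski fixed point
  solves the system.  For uniqueness, sum the equations over {k. y_k < y'_k}: each column sum
  sum_j (terms of F_j in y_k) telescopes to nu_k (ln|sin(a_k pi (x_n - y_k))| - ln|sin(a_k pi (x_0 - y_k))|),
  which is strictly decreasing.  Part (b) holds because sin(a_k pi (x_j - y_k)) < 0 exactly when k > j.
*)

section \<open>Trigonometric inequalities\<close>

lemma cot_strict_antimono:
  fixes p q :: real
  assumes "0 < p" "p < q" "q < pi"
  shows "cot q < cot p"
proof -
  have "sin p > 0" "sin q > 0" "sin (q - p) > 0"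
    using assms by (auto intro!: sin_gt_zero)
  then show ?thesis
    by (simp add: cot_def sin_diff divide_simps algebra_simps)
qed

lemma sin_ratio_eq_cot:
  fixes r h :: real
  assumes "sin r \<noteq> 0"
  shows "sin (r + h) / sin r = cos h + sin h * cot r"
    and "sin (h - r) / sin r = sin h * cot r - cos h"
  using assms by (simp_all add: sin_add sin_diff cot_def field_simps)

lemma ln_sin_increment_strict_antimono:
  fixes p q h :: real
  assumes "0 < p" "p < q" "0 < h" "q + h < pi"
  shows "ln (sin (q + h)) - ln (sin q) < ln (sin (p + h)) - ln (sin p)"
proof -
  have pos: "sin p > 0" "sin q > 0" "sin h > 0" "sin (p + h) > 0" "sin (q + h) > 0"
    using assms by (auto intro!: sin_gt_zero)
  have "sin h * cot q < sin h * cot p"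
    using cot_strict_antimono[of p q] assms pos by simp
  then have "sin (q + h) / sin q < sin (p + h) / sin p"
    using pos by (simp add: sin_ratio_eq_cot)
  then have "ln (sin (q + h) / sin q) < ln (sin (p + h) / sin p)"
    using pos by simp
  with pos show ?thesis
    by (simp add: ln_div)
qed

lemma ln_sin_reflect_strict_antimono:
  fixes p q t :: real
  assumes "0 < p" "p < q" "q < t" "t < pi"
  shows "ln (sin (t - q)) - ln (sin q) < ln (sin (t - p)) - ln (sin p)"
proof -
  have pos: "sin p > 0" "sin q > 0" "sin t > 0" "sin (t - p) > 0" "sin (t - q) > 0"
    using assms by (auto intro!: sin_gt_zero)
  have "sin t * cot q < sin t * cot p"
    using cot_strict_antimono[of p q] assms pos by simp
  then have "sin (t - q) / sin q < sin (t - p) / sin p"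
    using pos by (simp add: sin_ratio_eq_cot)
  then have "ln (sin (t - q) / sin q) < ln (sin (t - p) / sin p)"
    using pos by simp
  with pos show ?thesis
    by (simp add: ln_div)
qed

lemma sin_reflect_ratio_unbounded:
  fixes t E :: real
  assumes "0 < t" "t < pi"
  shows "\<exists>f. 0 < f \<and> f < t / 2 \<and> E \<le> sin (t - f) / sin f"
proof -
  have st: "sin t > 0"
    using assms by (intro sin_gt_zero)
  define f where "f = min (t / 4) (min (pi / 3) (sin t / (2 * (\<bar>E\<bar> + 1))))"
  have "f \<le> pi / 3"
    unfolding f_def by (intro min.coboundedI2 min.cobounded1)
  then have f: "0 < f" "f < t / 2" "f \<le> pi / 3" "f \<le> sin t / (2 * (\<bar>E\<bar> + 1))"
    using assms st by (auto simp: f_def)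
  have sf: "0 < sin f" "sin f \<le> f"
    using f by (auto intro!: sin_gt_zero sin_x_le_x)
  have "cos (pi / 3) \<le> cos f"
    using f by (intro cos_monotone_0_pi_le) auto
  then have "1 / 2 / f \<le> cot f"
    using sf f unfolding cot_def by (intro frac_le) (auto simp: cos_60)
  then have "sin t * (1 / 2 / f) \<le> sin t * cot f"
    using st by (intro mult_left_mono) auto
  moreover have "\<bar>E\<bar> + 1 \<le> sin t * (1 / 2 / f)"
    using f st by (simp add: field_simps)
  ultimately have "E \<le> sin t * cot f - cos t"
    using cos_le_one[of t] by linarith
  with sf(1) have "E \<le> sin (t - f) / sin f"
    by (simp add: sin_ratio_eq_cot)
  with f show ?thesis
    by blast
qed

section \<open>Monotone systems of equations\<close>

lemma chain_choice:
  assumes "\<And>i t. \<exists>s. P i t s"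
  shows "\<exists>u. \<forall>i. P i (u i) (u (Suc i))"
proof -
  define u where "u = rec_nat undefined (\<lambda>i t. SOME s. P i t s)"
  have "P i (u i) (u (Suc i))" for i
    using someI_ex[OF assms[of i "u i"]] by (simp add: u_def)
  then show ?thesis
    by blast
qed

lemma chain_choice_backward:
  assumes "\<And>i t. \<exists>s. P i t s"
  shows "\<exists>l. \<forall>i\<le>n. P i (l (Suc i)) (l i)"
proof -
  obtain u where u: "\<forall>i. P (n - i) (u i) (u (Suc i))"
    using chain_choice[of "\<lambda>i. P (n - i)"] assms by blast
  have "P i (u (Suc n - Suc i)) (u (Suc n - i))" if "i \<le> n" for i
  proof -
    have "Suc n - Suc i = n - i" "Suc n - i = Suc (n - i)" "n - (n - i) = i"
      using that by auto
    then show ?thesis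
      using u by metis
  qed
  then show ?thesis
    by (intro exI[of _ "\<lambda>i. u (Suc n - i)"]) simp
qed

lemma strict_antimono_on_solution_exists_unique:
  fixes f :: "real \<Rightarrow> real"
  assumes "a \<le> b" "f b \<le> c" "c \<le> f a"
    and "continuous_on {a..b} f" "strict_antimono_on {a..b} f"
  shows "\<exists>!s. a \<le> s \<and> s \<le> b \<and> f s = c"
proof (rule ex_ex1I)
  show "\<exists>s. a \<le> s \<and> s \<le> b \<and> f s = c"
    using IVT2'[of f b c a] assms by blast
next
  have "inj_on f {a..b}"
    using assms(5) strict_antimono_iff_antimono by blast
  then show "s = s'" if "a \<le> s \<and> s \<le> b \<and> f s = c" "a \<le> s' \<and> s' \<le> b \<and> f s' = c" for s s'
    using that by (auto dest: inj_onD)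
qed

lemma box_monotone_fixpoint:
  fixes B :: "('i \<Rightarrow> real) \<Rightarrow> 'i \<Rightarrow> real" and J :: "'i set" and l u :: "'i \<Rightarrow> real"
  defines "Box \<equiv> {y. \<forall>k\<in>J. l k \<le> y k \<and> y k \<le> u k}"
  assumes l: "l \<in> Box"
    and maps: "\<And>y. y \<in> Box \<Longrightarrow> B y \<in> Box"
    and mono: "\<And>y y' k. y \<in> Box \<Longrightarrow> y' \<in> Box \<Longrightarrow> \<forall>k\<in>J. y k \<le> y' k \<Longrightarrow> k \<in> J \<Longrightarrow> B y k \<le> B y' k"
  shows "\<exists>z\<in>Box. \<forall>k\<in>J. B z k = z k"
proof -
  (* Knaster-Tarski: the supremum of all y with y \<le> B y is a fixed point. *)
  define A where "A = {y \<in> Box. \<forall>k\<in>J. y k \<le> B y k}"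
  define z where "z k = Sup ((\<lambda>y. y k) ` A)" for k
  have "l \<in> A"
    using l maps unfolding A_def Box_def by auto
  have z_upper: "y k \<le> z k" if "y \<in> A" "k \<in> J" for y k
    unfolding z_def using that by (intro cSup_upper bdd_aboveI[of _ "u k"]) (auto simp: A_def Box_def)
  have z_least: "z k \<le> v" if "\<And>y. y \<in> A \<Longrightarrow> y k \<le> v" for k v
    unfolding z_def using \<open>l \<in> A\<close> that by (intro cSup_least) auto
  have "z \<in> Box"
    using z_upper[OF \<open>l \<in> A\<close>] z_least l unfolding Box_def A_def by fastforce
  have z_B: "z k \<le> B z k" if "k \<in> J" for k
  proof (rule z_least)
    fix y assume "y \<in> A"
    then have "y k \<le> B y k" "B y k \<le> B z k"
      using that z_upper \<open>z \<in> Box\<close> by (auto simp: A_def intro!: mono)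
    then show "y k \<le> B z k"
      by linarith
  qed
  have "B z \<in> A"
    using maps[OF \<open>z \<in> Box\<close>] \<open>z \<in> Box\<close> z_B by (auto simp: A_def intro!: mono)
  then have "B z k \<le> z k" if "k \<in> J" for k
    using z_upper that by blast
  with z_B show ?thesis
    using \<open>z \<in> Box\<close> by (auto intro: antisym)
qed

lemma monotone_system_solvable:
  fixes F :: "'i \<Rightarrow> ('i \<Rightarrow> real) \<Rightarrow> real" and J :: "'i set" and c l u :: "'i \<Rightarrow> real"
  defines "Box \<equiv> {y. \<forall>k\<in>J. l k \<le> y k \<and> y k \<le> u k}"
  assumes lu: "\<And>k. k \<in> J \<Longrightarrow> l k \<le> u k"
    and sub: "\<And>j. j \<in> J \<Longrightarrow> c j \<le> F j l"
    and super: "\<And>j. j \<in> J \<Longrightarrow> F j u \<le> c j"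
    and off: "\<And>j y y'. j \<in> J \<Longrightarrow> y \<in> Box \<Longrightarrow> y' \<in> Box \<Longrightarrow> \<forall>k\<in>J. y k \<le> y' k \<Longrightarrow>
      y j = y' j \<Longrightarrow> F j y \<le> F j y'"
    and diag: "\<And>j y. j \<in> J \<Longrightarrow> y \<in> Box \<Longrightarrow> strict_antimono_on {l j..u j} (\<lambda>s. F j (y(j := s)))"
    and cont: "\<And>j y. j \<in> J \<Longrightarrow> y \<in> Box \<Longrightarrow> continuous_on {l j..u j} (\<lambda>s. F j (y(j := s)))"
  shows "\<exists>y\<in>Box. \<forall>j\<in>J. F j y = c j"
proof -
  have upd: "y(j := s) \<in> Box" if "y \<in> Box" "l j \<le> s" "s \<le> u j" for y j s
    using that by (auto simp: Box_def)
  have "l \<in> Box" "u \<in> Box"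
    using lu by (auto simp: Box_def)
  have response: "\<exists>!s. l j \<le> s \<and> s \<le> u j \<and> F j (y(j := s)) = c j" if "j \<in> J" "y \<in> Box" for j y
  proof (rule strict_antimono_on_solution_exists_unique)
    have "F j (y(j := u j)) \<le> F j (u(j := u j))" "F j (l(j := l j)) \<le> F j (y(j := l j))"
      using that lu \<open>l \<in> Box\<close> \<open>u \<in> Box\<close> by (auto intro!: off upd simp: Box_def)
    then show "F j (y(j := u j)) \<le> c j" "c j \<le> F j (y(j := l j))"
      using sub[OF that(1)] super[OF that(1)] by simp_all
  qed (use that lu diag cont in auto)
  define B where "B y j = (THE s. l j \<le> s \<and> s \<le> u j \<and> F j (y(j := s)) = c j)" for y j
  have B: "l j \<le> B y j \<and> B y j \<le> u j \<and> F j (y(j := B y j)) = c j" if "j \<in> J" "y \<in> Box" for j y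
    using theI'[OF response[OF that]] unfolding B_def .
  have "B y j \<le> B y' j"
    if "y \<in> Box" "y' \<in> Box" "\<forall>k\<in>J. y k \<le> y' k" "j \<in> J" for y y' j
  proof (rule ccontr)
    assume "\<not> B y j \<le> B y' j"
    then have "F j (y'(j := B y j)) < F j (y'(j := B y' j))"
      using monotone_onD[OF diag[OF that(4,2)], of "B y' j" "B y j"] B[OF that(4,1)] B[OF that(4,2)]
      by auto
    moreover have "F j (y(j := B y j)) \<le> F j (y'(j := B y j))"
      using that B[OF that(4,1)] by (intro off) (auto intro: upd)
    ultimately show False
      using B[OF that(4,1)] B[OF that(4,2)] by simp
  qed
  moreover have "B y \<in> Box" if "y \<in> Box" for y
    using B that by (auto simp: Box_def)
  ultimately obtain z where "z \<in> Box" "\<forall>k\<in>J. B z k = z k"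
    using box_monotone_fixpoint[of l J u B] \<open>l \<in> Box\<close> unfolding Box_def by blast
  then show ?thesis
    using B by (metis fun_upd_triv)
qed

lemma column_dominant_system_solution_le:
  fixes T :: "'i \<Rightarrow> 'i \<Rightarrow> real \<Rightarrow> real" and J :: "'i set" and lo hi y y' :: "'i \<Rightarrow> real"
  assumes "finite J"
    and off: "\<And>j k s s'. j \<in> J \<Longrightarrow> k \<in> J \<Longrightarrow> j \<noteq> k \<Longrightarrow> lo k < s \<Longrightarrow> s \<le> s' \<Longrightarrow> s' < hi k \<Longrightarrow>
      T j k s \<le> T j k s'"
    and col: "\<And>k s s'. k \<in> J \<Longrightarrow> lo k < s \<Longrightarrow> s < s' \<Longrightarrow> s' < hi k \<Longrightarrow>
      (\<Sum>j\<in>J. T j k s') < (\<Sum>j\<in>J. T j k s)"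
    and y: "\<And>k. k \<in> J \<Longrightarrow> lo k < y k \<and> y k < hi k"
    and y': "\<And>k. k \<in> J \<Longrightarrow> lo k < y' k \<and> y' k < hi k"
    and eq: "\<And>j. j \<in> J \<Longrightarrow> (\<Sum>k\<in>J. T j k (y k)) = (\<Sum>k\<in>J. T j k (y' k))"
  shows "\<forall>k\<in>J. y' k \<le> y k"
proof (rule ccontr)
  (* Sum the equations over I: the columns k \<in> I strictly decrease, the others do not increase. *)
  define I where "I = {k \<in> J. y k < y' k}"
  assume "\<not> (\<forall>k\<in>J. y' k \<le> y k)"
  then obtain k0 where "k0 \<in> I"
    unfolding I_def by force
  have "I \<subseteq> J" "finite I"
    using \<open>finite J\<close> by (auto simp: I_def intro: finite_subset)
  define \<phi> where "\<phi> k s = (\<Sum>j\<in>I. T j k s)" for k s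
  have "\<phi> k (y' k) < \<phi> k (y k)" if "k \<in> I" for k
  proof -
    have split: "\<phi> k s = (\<Sum>j\<in>J. T j k s) - (\<Sum>j\<in>J - I. T j k s)" for s
      unfolding \<phi>_def using \<open>I \<subseteq> J\<close> \<open>finite J\<close> by (simp add: sum_diff)
    have "(\<Sum>j\<in>J - I. T j k (y k)) \<le> (\<Sum>j\<in>J - I. T j k (y' k))"
      using that y y' by (intro sum_mono off) (auto simp: I_def)
    moreover have "(\<Sum>j\<in>J. T j k (y' k)) < (\<Sum>j\<in>J. T j k (y k))"
      using that y y' by (intro col) (auto simp: I_def)
    ultimately show ?thesis
      unfolding split by linarith
  qed
  moreover have "\<phi> k (y' k) \<le> \<phi> k (y k)" if "k \<in> J - I" for k
    unfolding \<phi>_def using that y y' \<open>I \<subseteq> J\<close> by (intro sum_mono off) (auto simp: I_def)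
  ultimately have "(\<Sum>k\<in>J. \<phi> k (y' k)) < (\<Sum>k\<in>J. \<phi> k (y k))"
    using \<open>k0 \<in> I\<close> \<open>I \<subseteq> J\<close> \<open>finite J\<close>
    by (intro sum_strict_mono_ex1) (auto intro: less_imp_le)
  moreover have "(\<Sum>k\<in>J. \<phi> k (z k)) = (\<Sum>j\<in>I. \<Sum>k\<in>J. T j k (z k))" for z
    unfolding \<phi>_def by (rule sum.swap)
  ultimately show False
    using eq \<open>I \<subseteq> J\<close> by (simp add: subset_iff)
qed

lemma column_dominant_system_solution_unique:
  fixes T :: "'i \<Rightarrow> 'i \<Rightarrow> real \<Rightarrow> real" and J :: "'i set" and lo hi y y' :: "'i \<Rightarrow> real"
  assumes "finite J"
    and "\<And>j k s s'. j \<in> J \<Longrightarrow> k \<in> J \<Longrightarrow> j \<noteq> k \<Longrightarrow> lo k < s \<Longrightarrow> s \<le> s' \<Longrightarrow> s' < hi k \<Longrightarrow>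
      T j k s \<le> T j k s'"
    and "\<And>k s s'. k \<in> J \<Longrightarrow> lo k < s \<Longrightarrow> s < s' \<Longrightarrow> s' < hi k \<Longrightarrow>
      (\<Sum>j\<in>J. T j k s') < (\<Sum>j\<in>J. T j k s)"
    and "\<And>k. k \<in> J \<Longrightarrow> lo k < y k \<and> y k < hi k"
    and "\<And>k. k \<in> J \<Longrightarrow> lo k < y' k \<and> y' k < hi k"
    and "\<And>j. j \<in> J \<Longrightarrow> (\<Sum>k\<in>J. T j k (y k)) = (\<Sum>k\<in>J. T j k (y' k))"
  shows "\<forall>k\<in>J. y' k = y k"
proof -
  have "\<forall>k\<in>J. y' k \<le> y k"
    by (rule column_dominant_system_solution_le[OF assms(1-6)])
  moreover have "(\<Sum>k\<in>J. T j k (y' k)) = (\<Sum>k\<in>J. T j k (y k))" if "j \<in> J" for j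
    using assms(6)[OF that] by simp
  then have "\<forall>k\<in>J. y k \<le> y' k"
    using column_dominant_system_solution_le[where y = y' and y' = y] assms(1-5) by blast
  ultimately show ?thesis
    by (auto intro: order_antisym)
qed

lemma eq_upto_iff_differences:
  fixes f g :: "nat \<Rightarrow> 'a::ab_group_add"
  shows "(\<forall>j\<le>n. f j = g j) \<longleftrightarrow> f 0 = g 0 \<and> (\<forall>j\<in>{1..n}. f j - f (j - 1) = g j - g (j - 1))"
proof (intro iffI allI impI)
  fix j
  assume "f 0 = g 0 \<and> (\<forall>j\<in>{1..n}. f j - f (j - 1) = g j - g (j - 1))" and "j \<le> n"
  then show "f j = g j"
  proof (induction j)
    case (Suc j)
    then have "f (Suc j) - f j = g (Suc j) - g j"
      by force
    with Suc show ?case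
      by simp
  qed simp
qed auto

section \<open>The interpolation problem in logarithmic form\<close>

locale sine_interpolation =
  fixes n :: nat and x nu a :: "nat \<Rightarrow> real"
  assumes x_less_Suc: "\<And>j. j < n \<Longrightarrow> x j < x (Suc j)"
    and nu_pos: "\<And>k. k \<in> {1..n} \<Longrightarrow> 0 < nu k"
    and a_pos: "\<And>k. k \<in> {1..n} \<Longrightarrow> 0 < a k"
    and a_width: "\<And>k. k \<in> {1..n} \<Longrightarrow> a k * (x n - x 0) < 1"
begin

(* logS y j = ln (S(x_j) / C) and logdiff j k (y k) is the contribution of y_k to
   ln S(x_j) - ln S(x_(j-1)).  The junk value ln 0 = 0 of lsin at zeros of the sine never matters:
   at the nodes of an interlacing y all sines are nonzero. *)

definition lsin :: "nat \<Rightarrow> real \<Rightarrow> real" where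
  "lsin k u = ln \<bar>sin (a k * pi * u)\<bar>"

definition logdiff :: "nat \<Rightarrow> nat \<Rightarrow> real \<Rightarrow> real" where
  "logdiff j k s = nu k * (lsin k (x j - s) - lsin k (x (j - 1) - s))"

definition logS :: "(nat \<Rightarrow> real) \<Rightarrow> nat \<Rightarrow> real" where
  "logS y j = (\<Sum>k = 1..n. nu k * lsin k (x j - y k))"

definition interlacing :: "(nat \<Rightarrow> real) \<Rightarrow> bool" where
  "interlacing y \<longleftrightarrow> (\<forall>k\<in>{1..n}. x (k - 1) < y k \<and> y k < x k)"

definition mid :: "nat \<Rightarrow> real" where
  "mid j = (x (j - 1) + x j) / 2"

lemma x_less: "i < j \<Longrightarrow> j \<le> n \<Longrightarrow> x i < x j"
proof (induction j)
  case (Suc j)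
  then show ?case
    using x_less_Suc[of j] by (cases "i = j") auto
qed simp

lemma x_le: "i \<le> j \<Longrightarrow> j \<le> n \<Longrightarrow> x i \<le> x j"
  using x_less by (cases "i = j") (auto intro: less_imp_le)

lemma x_pred_less: "j \<in> {1..n} \<Longrightarrow> x (j - 1) < x j"
  by (intro x_less) auto

lemma mid_bounds: "j \<in> {1..n} \<Longrightarrow> x (j - 1) < mid j \<and> mid j < x j"
  using x_pred_less[of j] by (simp add: mid_def)

lemma scaled_arg_bounds:
  assumes "k \<in> {1..n}" "0 < u" "u \<le> x n - x 0"
  shows "0 < a k * pi * u" "a k * pi * u < pi"
proof -
  have "a k * u \<le> a k * (x n - x 0)"
    using assms a_pos[OF assms(1)] by (intro mult_left_mono) auto
  then have "a k * u < 1"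
    using a_width[OF assms(1)] by linarith
  then show "a k * pi * u < pi"
    by (simp add: mult.commute mult.left_commute)
  show "0 < a k * pi * u"
    using assms a_pos by simp
qed

lemma sin_scaled_pos: "k \<in> {1..n} \<Longrightarrow> 0 < u \<Longrightarrow> u \<le> x n - x 0 \<Longrightarrow> 0 < sin (a k * pi * u)"
  using scaled_arg_bounds by (intro sin_gt_zero)

lemma lsin_minus [simp]: "lsin k (- u) = lsin k u"
  by (simp add: lsin_def)

lemma lsin_commute: "lsin k (v - u) = lsin k (u - v)"
  using lsin_minus[of k "u - v"] by simp

lemma lsin_eq: "k \<in> {1..n} \<Longrightarrow> 0 < u \<Longrightarrow> u \<le> x n - x 0 \<Longrightarrow> lsin k u = ln (sin (a k * pi * u))"
  using sin_scaled_pos by (simp add: lsin_def less_imp_le)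

lemma lsin_increment_strict_antimono:
  assumes "k \<in> {1..n}" "0 < u" "u < u'" "0 < h" "u' + h \<le> x n - x 0"
  shows "lsin k (u' + h) - lsin k u' < lsin k (u + h) - lsin k u"
proof -
  have "0 < a k * pi"
    using a_pos[OF assms(1)] by simp
  then have "0 < a k * pi * u" "a k * pi * u < a k * pi * u'" "0 < a k * pi * h"
    "a k * pi * u' + a k * pi * h < pi"
    using scaled_arg_bounds[OF assms(1), of "u' + h"] assms
    by (auto simp: distrib_left intro: mult_strict_left_mono)
  then have "ln (sin (a k * pi * u' + a k * pi * h)) - ln (sin (a k * pi * u'))
      < ln (sin (a k * pi * u + a k * pi * h)) - ln (sin (a k * pi * u))"
    by (rule ln_sin_increment_strict_antimono)
  with assms show ?thesis
    by (simp add: lsin_eq distrib_left)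
qed

lemma lsin_reflect_strict_antimono:
  assumes "k \<in> {1..n}" "0 < v" "v < v'" "v' < d" "d \<le> x n - x 0"
  shows "lsin k (d - v') - lsin k v' < lsin k (d - v) - lsin k v"
proof -
  have "0 < a k * pi"
    using a_pos[OF assms(1)] by simp
  then have "0 < a k * pi * v" "a k * pi * v < a k * pi * v'" "a k * pi * v' < a k * pi * d"
    "a k * pi * d < pi"
    using scaled_arg_bounds[OF assms(1), of d] assms by (auto intro: mult_strict_left_mono)
  then have "ln (sin (a k * pi * d - a k * pi * v')) - ln (sin (a k * pi * v'))
      < ln (sin (a k * pi * d - a k * pi * v)) - ln (sin (a k * pi * v))"
    by (rule ln_sin_reflect_strict_antimono)
  with assms show ?thesis
    by (simp add: lsin_eq right_diff_distrib)
qed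

lemma logdiff_mono_left:
  assumes "j \<in> {1..n}" "k \<in> {1..n}" "x 0 \<le> s" "s \<le> s'" "s' < x (j - 1)"
  shows "logdiff j k s \<le> logdiff j k s'"
proof (cases "s = s'")
  case False
  have "x j \<le> x n"
    using assms(1) by (intro x_le) auto
  then have "lsin k (x (j - 1) - s + (x j - x (j - 1))) - lsin k (x (j - 1) - s)
      < lsin k (x (j - 1) - s' + (x j - x (j - 1))) - lsin k (x (j - 1) - s')"
    using assms False x_pred_less[OF assms(1)] by (intro lsin_increment_strict_antimono) auto
  then show ?thesis
    using nu_pos[OF assms(2)] by (simp add: logdiff_def)
qed simp

lemma logdiff_mono_right:
  assumes "j \<in> {1..n}" "k \<in> {1..n}" "x j < s" "s \<le> s'" "s' \<le> x n"
  shows "logdiff j k s \<le> logdiff j k s'"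
proof (cases "s = s'")
  case False
  have "x 0 \<le> x (j - 1)"
    using assms(1) by (intro x_le) auto
  then have "lsin k (s' - x j + (x j - x (j - 1))) - lsin k (s' - x j)
      < lsin k (s - x j + (x j - x (j - 1))) - lsin k (s - x j)"
    using assms False x_pred_less[OF assms(1)] by (intro lsin_increment_strict_antimono) auto
  moreover have "logdiff j k t = - nu k * (lsin k (t - x j + (x j - x (j - 1))) - lsin k (t - x j))"
    for t
    by (simp add: logdiff_def lsin_commute[of k _ t] algebra_simps)
  ultimately show ?thesis
    using nu_pos[OF assms(2)] by simp
qed simp

lemma logdiff_off_diag_mono:
  assumes "j \<in> {1..n}" "k \<in> {1..n}" "k \<noteq> j" "x (k - 1) < s" "s \<le> s'" "s' < x k"
  shows "logdiff j k s \<le> logdiff j k s'"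
proof (cases "k < j")
  case True
  have "x 0 \<le> x (k - 1)" "x k \<le> x (j - 1)"
    using True assms(1) by (auto intro: x_le)
  with assms show ?thesis
    by (intro logdiff_mono_left) auto
next
  case False
  have "x j \<le> x (k - 1)" "x k \<le> x n"
    using False assms by (auto intro: x_le)
  with assms show ?thesis
    by (intro logdiff_mono_right) auto
qed

lemma logdiff_ge_left_end:
  assumes "j \<in> {1..n}" "k \<in> {1..n}" "k \<noteq> j" "k \<noteq> Suc j" "x (k - 1) < s" "s < x k"
  shows "logdiff j k (x (k - 1)) \<le> logdiff j k s"
proof (cases "k < j")
  case True
  have "x 0 \<le> x (k - 1)" "x k \<le> x (j - 1)"
    using True assms(1) by (auto intro: x_le)
  with assms show ?thesis
    by (intro logdiff_mono_left) auto
next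
  case False
  have "x j < x (k - 1)" "x k \<le> x n"
    using False assms by (auto intro: x_less x_le)
  with assms show ?thesis
    by (intro logdiff_mono_right) auto
qed

lemma logdiff_le_right_end:
  assumes "j \<in> {1..n}" "k \<in> {1..n}" "k \<noteq> j" "k \<noteq> j - 1" "x (k - 1) < s" "s < x k"
  shows "logdiff j k s \<le> logdiff j k (x k)"
proof (cases "k < j")
  case True
  have "x 0 \<le> x (k - 1)" "x k < x (j - 1)"
    using True assms by (auto intro: x_le x_less)
  with assms show ?thesis
    by (intro logdiff_mono_left) auto
next
  case False
  have "x j \<le> x (k - 1)" "x k \<le> x n"
    using False assms by (auto intro: x_le)
  with assms show ?thesis
    by (intro logdiff_mono_right) auto
qed

lemma logdiff_diag_reflect: "logdiff j j (x (j - 1) + x j - s) = - logdiff j j s"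
  by (simp add: logdiff_def lsin_commute[of j s] algebra_simps)

lemma logdiff_diag_strict_antimono:
  assumes "j \<in> {1..n}"
  shows "strict_antimono_on {x (j - 1)<..<x j} (logdiff j j)"
proof (rule monotone_onI)
  fix s s' assume "s \<in> {x (j - 1)<..<x j}" "s' \<in> {x (j - 1)<..<x j}" "s < s'"
  moreover have "x 0 \<le> x (j - 1)" "x j \<le> x n"
    using assms by (auto intro: x_le)
  ultimately have "lsin j (x j - x (j - 1) - (s' - x (j - 1))) - lsin j (s' - x (j - 1))
      < lsin j (x j - x (j - 1) - (s - x (j - 1))) - lsin j (s - x (j - 1))"
    using assms by (intro lsin_reflect_strict_antimono) auto
  moreover have "logdiff j j t = nu j * (lsin j (x j - x (j - 1) - (t - x (j - 1))) - lsin j (t - x (j - 1)))"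
    for t
    by (simp add: logdiff_def lsin_commute[of j t])
  ultimately show "logdiff j j s' < logdiff j j s"
    using nu_pos[OF assms] by simp
qed

lemma logdiff_diag_continuous:
  assumes "j \<in> {1..n}"
  shows "continuous_on {x (j - 1)<..<x j} (logdiff j j)"
proof -
  have "x 0 \<le> x (j - 1)" "x j \<le> x n"
    using assms by (auto intro: x_le)
  then have "0 < sin (a j * pi * (x j - s))" "0 < sin (a j * pi * (s - x (j - 1)))"
    if "s \<in> {x (j - 1)<..<x j}" for s
    using that assms by (auto intro!: sin_scaled_pos)
  moreover have "sin (a j * pi * (x (j - 1) - s)) = - sin (a j * pi * (s - x (j - 1)))" for s
    by (simp flip: sin_minus add: algebra_simps)
  ultimately show ?thesis
    unfolding logdiff_def[abs_def] lsin_def by (intro continuous_intros) force+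
qed

lemma logdiff_diag_unbounded_above:
  assumes "j \<in> {1..n}"
  shows "\<exists>s. x (j - 1) < s \<and> s \<le> mid j \<and> M \<le> logdiff j j s"
proof -
  define c where "c = a j * pi"
  define t where "t = c * (x j - x (j - 1))"
  have c: "0 < c"
    using a_pos[OF assms] by (simp add: c_def)
  have "x 0 \<le> x (j - 1)" "x j \<le> x n"
    using assms by (auto intro: x_le)
  then have t: "0 < t" "t < pi"
    using scaled_arg_bounds[OF assms] x_pred_less[OF assms] by (auto simp: t_def c_def)
  obtain f where f: "0 < f" "f < t / 2" "exp (M / nu j) \<le> sin (t - f) / sin f"
    using sin_reflect_ratio_unbounded[OF t] by blast
  have sin_pos: "0 < sin f" "0 < sin (t - f)"
    using f t by (auto intro!: sin_gt_zero)
  define s where "s = x (j - 1) + f / c"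
  have "c * (s - x (j - 1)) = f" "c * (x j - s) = t - f"
    using c by (simp_all add: s_def t_def algebra_simps)
  with sin_pos have "lsin j (x j - s) - lsin j (s - x (j - 1)) = ln (sin (t - f) / sin f)"
    by (simp add: lsin_def ln_div flip: c_def)
  then have "logdiff j j s = nu j * ln (sin (t - f) / sin f)"
    by (simp add: logdiff_def lsin_commute[of j s])
  moreover have "M / nu j \<le> ln (sin (t - f) / sin f)"
    using f sin_pos by (subst ln_ge_iff) auto
  ultimately have "M \<le> logdiff j j s"
    using nu_pos[OF assms] by (simp add: field_simps)
  moreover have "x (j - 1) < s" "s \<le> mid j"
    using f c by (auto simp: s_def mid_def t_def field_simps)
  ultimately show ?thesis
    by blast
qed

lemma logdiff_diag_unbounded_below:
  assumes "j \<in> {1..n}"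
  shows "\<exists>s. mid j \<le> s \<and> s < x j \<and> logdiff j j s \<le> M"
proof -
  obtain s where "x (j - 1) < s" "s \<le> mid j" "- M \<le> logdiff j j s"
    using logdiff_diag_unbounded_above[OF assms] by blast
  then show ?thesis
    using logdiff_diag_reflect[of j s] by (intro exI[of _ "x (j - 1) + x j - s"]) (auto simp: mid_def)
qed

lemma logdiff_column_sum:
  "(\<Sum>j = 1..n. logdiff j k s) = nu k * (lsin k (x n - s) - lsin k (x 0 - s))"
  using sum_telescope''[of 0 n "\<lambda>j. nu k * lsin k (x j - s)"]
  by (simp add: logdiff_def right_diff_distrib)

lemma logdiff_column_sum_strict_antimono:
  assumes "k \<in> {1..n}" "x 0 < s" "s < s'" "s' < x n"
  shows "(\<Sum>j = 1..n. logdiff j k s') < (\<Sum>j = 1..n. logdiff j k s)"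
proof -
  have "lsin k (x n - x 0 - (s' - x 0)) - lsin k (s' - x 0) < lsin k (x n - x 0 - (s - x 0)) - lsin k (s - x 0)"
    using assms by (intro lsin_reflect_strict_antimono) auto
  then show ?thesis
    unfolding logdiff_column_sum using nu_pos[OF assms(1)] by (simp add: lsin_commute[of k _ "x 0"])
qed

lemma sum_logdiff_eq_logS: "(\<Sum>k = 1..n. logdiff j k (y k)) = logS y j - logS y (j - 1)"
  by (simp add: logdiff_def logS_def sum_subtractf right_diff_distrib)

lemma sum_logdiff_update:
  assumes "j \<in> {1..n}"
  shows "(\<Sum>k = 1..n. logdiff j k ((y(j := s)) k)) = logdiff j j s + (\<Sum>k\<in>{1..n} - {j}. logdiff j k (y k))"
proof -
  have "(\<Sum>k = 1..n. logdiff j k ((y(j := s)) k))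
      = logdiff j j s + (\<Sum>k\<in>{1..n} - {j}. logdiff j k ((y(j := s)) k))"
    using assms by (subst sum.remove[of "{1..n}" j]) auto
  also have "(\<Sum>k\<in>{1..n} - {j}. logdiff j k ((y(j := s)) k)) = (\<Sum>k\<in>{1..n} - {j}. logdiff j k (y k))"
    by (rule sum.cong) auto
  finally show ?thesis .
qed

lemma exists_subsolution:
  "\<exists>l. \<forall>j\<in>{1..n}. x (j - 1) < l j \<and> l j \<le> mid j \<and> c j \<le> (\<Sum>k = 1..n. logdiff j k (l k))"
proof -
  (* All terms of equation j are bounded below by their values at x (k - 1), except the one of
     y (j + 1), which tends to -oo as y (j + 1) approaches x j.  So l (j + 1) is chosen before l j. *)
  define rest where "rest j t =
    (\<Sum>k\<in>{1..n} - {j}. if k = Suc j then logdiff j k t else logdiff j k (x (k - 1)))" for j t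
  define P where "P j t s \<longleftrightarrow>
    (j \<in> {1..n} \<longrightarrow> x (j - 1) < s \<and> s \<le> mid j \<and> c j - rest j t \<le> logdiff j j s)" for j t s
  have "\<exists>s. P j t s" for j t
    using logdiff_diag_unbounded_above unfolding P_def by blast
  then obtain l where l: "\<forall>j\<le>n. P j (l (Suc j)) (l j)"
    using chain_choice_backward[of P n] by blast
  then have l_bounds: "x (k - 1) < l k \<and> l k < x k" if "k \<in> {1..n}" for k
    using that mid_bounds[OF that] unfolding P_def by force
  have "c j \<le> (\<Sum>k = 1..n. logdiff j k (l k))" if j: "j \<in> {1..n}" for j
  proof -
    have "rest j (l (Suc j)) \<le> (\<Sum>k\<in>{1..n} - {j}. logdiff j k (l k))"
      unfolding rest_def
    proof (rule sum_mono)
      fix k assume "k \<in> {1..n} - {j}"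
      then show "(if k = Suc j then logdiff j k (l (Suc j)) else logdiff j k (x (k - 1))) \<le> logdiff j k (l k)"
        using logdiff_ge_left_end[OF j, of k "l k"] l_bounds[of k] by auto
    qed
    then show ?thesis
      using l j sum_logdiff_update[OF j, of l "l j"] unfolding P_def by auto
  qed
  then show ?thesis
    using l unfolding P_def by (intro exI[of _ l]) auto
qed

lemma exists_supersolution:
  "\<exists>u. \<forall>j\<in>{1..n}. mid j \<le> u j \<and> u j < x j \<and> (\<Sum>k = 1..n. logdiff j k (u k)) \<le> c j"
proof -
  define rest where "rest j t =
    (\<Sum>k\<in>{1..n} - {j}. if k = j - 1 then logdiff j k t else logdiff j k (x k))" for j t
  define P where "P j t s \<longleftrightarrow>
    (j \<in> {1..n} \<longrightarrow> mid j \<le> s \<and> s < x j \<and> logdiff j j s \<le> c j - rest j t)" for j t s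
  have "\<exists>s. P (Suc i) t s" for i t
    using logdiff_diag_unbounded_below unfolding P_def by blast
  then obtain u where u: "\<forall>i. P (Suc i) (u i) (u (Suc i))"
    using chain_choice[of "\<lambda>i. P (Suc i)"] by blast
  then have u_at: "P j (u (j - 1)) (u j)" if "j \<in> {1..n}" for j
    using that by (metis Suc_pred' atLeastAtMost_iff less_eq_Suc_le One_nat_def)
  then have u_bounds: "x (k - 1) < u k \<and> u k < x k" if "k \<in> {1..n}" for k
    using that mid_bounds[OF that] unfolding P_def by force
  have "(\<Sum>k = 1..n. logdiff j k (u k)) \<le> c j" if j: "j \<in> {1..n}" for j
  proof -
    have "(\<Sum>k\<in>{1..n} - {j}. logdiff j k (u k)) \<le> rest j (u (j - 1))"
      unfolding rest_def
    proof (rule sum_mono)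
      fix k assume "k \<in> {1..n} - {j}"
      then show "logdiff j k (u k) \<le> (if k = j - 1 then logdiff j k (u (j - 1)) else logdiff j k (x k))"
        using logdiff_le_right_end[OF j, of k "u k"] u_bounds[of k] by auto
    qed
    then show ?thesis
      using u_at[OF j] j sum_logdiff_update[OF j, of u "u j"] unfolding P_def by auto
  qed
  then show ?thesis
    using u_at unfolding P_def by (intro exI[of _ u]) auto
qed

lemma exists_log_solution:
  "\<exists>y. interlacing y \<and> (\<forall>j\<in>{1..n}. (\<Sum>k = 1..n. logdiff j k (y k)) = c j)"
proof -
  obtain l where l: "\<forall>j\<in>{1..n}. x (j - 1) < l j \<and> l j \<le> mid j \<and> c j \<le> (\<Sum>k = 1..n. logdiff j k (l k))"
    using exists_subsolution by blast
  obtain u where u: "\<forall>j\<in>{1..n}. mid j \<le> u j \<and> u j < x j \<and> (\<Sum>k = 1..n. logdiff j k (u k)) \<le> c j"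
    using exists_supersolution by blast
  define Box where "Box = {y. \<forall>k\<in>{1..n}. l k \<le> y k \<and> y k \<le> u k}"
  have Box_sub: "{l k..u k} \<subseteq> {x (k - 1)<..<x k}" if "k \<in> {1..n}" for k
    using l u that by force
  have in_gaps: "x (k - 1) < y k \<and> y k < x k" if "y \<in> Box" "k \<in> {1..n}" for y k
  proof -
    have "y k \<in> {l k..u k}"
      using that by (simp add: Box_def)
    then show ?thesis
      using Box_sub[OF that(2)] by auto
  qed
  have "\<exists>y\<in>Box. \<forall>j\<in>{1..n}. (\<Sum>k = 1..n. logdiff j k (y k)) = c j"
    unfolding Box_def
  proof (rule monotone_system_solvable)
    fix j y y'
    assume j: "j \<in> {1..n}" and y: "y \<in> {y. \<forall>k\<in>{1..n}. l k \<le> y k \<and> y k \<le> u k}"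
      and y': "y' \<in> {y. \<forall>k\<in>{1..n}. l k \<le> y k \<and> y k \<le> u k}"
      and le: "\<forall>k\<in>{1..n}. y k \<le> y' k" and "y j = y' j"
    have "logdiff j k (y k) \<le> logdiff j k (y' k)" if "k \<in> {1..n}" for k
      using \<open>y j = y' j\<close> logdiff_off_diag_mono[OF j that] in_gaps[of y k] in_gaps[of y' k] y y' le that
      unfolding Box_def by (cases "k = j") auto
    then show "(\<Sum>k = 1..n. logdiff j k (y k)) \<le> (\<Sum>k = 1..n. logdiff j k (y' k))"
      by (intro sum_mono) auto
  next
    fix j y
    assume j: "j \<in> {1..n}"
    have "strict_antimono_on {l j..u j} (logdiff j j)"
      using logdiff_diag_strict_antimono[OF j] Box_sub[OF j] by (rule monotone_on_subset)
    then show "strict_antimono_on {l j..u j} (\<lambda>s. \<Sum>k = 1..n. logdiff j k ((y(j := s)) k))"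
      unfolding sum_logdiff_update[OF j] by (auto simp: monotone_on_def)
    show "continuous_on {l j..u j} (\<lambda>s. \<Sum>k = 1..n. logdiff j k ((y(j := s)) k))"
      unfolding sum_logdiff_update[OF j]
      by (intro continuous_intros continuous_on_subset[OF logdiff_diag_continuous[OF j] Box_sub[OF j]])
  qed (use l u in force)+
  then show ?thesis
    using in_gaps unfolding interlacing_def by blast
qed

lemma log_solution_unique:
  assumes "interlacing y" "interlacing y'"
    and "\<And>j. j \<in> {1..n} \<Longrightarrow> (\<Sum>k = 1..n. logdiff j k (y k)) = (\<Sum>k = 1..n. logdiff j k (y' k))"
  shows "\<forall>k\<in>{1..n}. y' k = y k"
proof (rule column_dominant_system_solution_unique[where lo = "\<lambda>k. x (k - 1)" and hi = x])
  fix k s s' assume "k \<in> {1..n}" "x (k - 1) < s" "s < s'" "s' < x k"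
  moreover have "x 0 \<le> x (k - 1)" "x k \<le> x n"
    using \<open>k \<in> {1..n}\<close> by (auto intro: x_le)
  ultimately show "(\<Sum>j = 1..n. logdiff j k s') < (\<Sum>j = 1..n. logdiff j k s)"
    by (intro logdiff_column_sum_strict_antimono) auto
qed (use assms logdiff_off_diag_mono in \<open>auto simp: interlacing_def\<close>)

lemma sin_node_pos:
  assumes "interlacing y" "k \<in> {1..n}" "k \<le> j" "j \<le> n"
  shows "0 < sin (a k * pi * (x j - y k))"
proof -
  have "x (k - 1) < y k" "y k < x k" "x 0 \<le> x (k - 1)" "x k \<le> x j" "x j \<le> x n"
    using assms by (auto simp: interlacing_def intro: x_le)
  with assms(2) show ?thesis
    by (intro sin_scaled_pos) auto
qed

lemma sin_node_neg:
  assumes "interlacing y" "k \<in> {1..n}" "j < k"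
  shows "sin (a k * pi * (x j - y k)) < 0"
proof -
  have "x (k - 1) < y k" "y k < x k" "x 0 \<le> x j" "x j \<le> x (k - 1)" "x k \<le> x n"
    using assms by (auto simp: interlacing_def intro: x_le)
  with assms(2) have "0 < sin (a k * pi * (y k - x j))"
    by (intro sin_scaled_pos) auto
  moreover have "sin (a k * pi * (x j - y k)) = - sin (a k * pi * (y k - x j))"
    by (metis minus_diff_eq mult_minus_right sin_minus)
  ultimately show ?thesis
    by simp
qed

lemma sin_node_nonzero:
  "interlacing y \<Longrightarrow> k \<in> {1..n} \<Longrightarrow> j \<le> n \<Longrightarrow> sin (a k * pi * (x j - y k)) \<noteq> 0"
  using sin_node_pos[of y k j] sin_node_neg[of y k j] by (cases "k \<le> j") auto

lemma S_fun_at_node: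
  assumes "interlacing y" "j \<le> n"
  shows "S_fun n C a nu y (x j) = C * exp (logS y j)"
proof -
  have "(\<Prod>k = 1..n. \<bar>sin (a k * pi * (x j - y k))\<bar> powr nu k) = (\<Prod>k = 1..n. exp (nu k * lsin k (x j - y k)))"
    using sin_node_nonzero[OF assms(1) _ assms(2)] by (intro prod.cong) (auto simp: powr_def lsin_def)
  then show ?thesis
    by (simp add: S_fun_def logS_def exp_sum)
qed

lemma is_solution_iff:
  assumes "\<forall>j\<le>n. 0 < alpha j"
  shows "is_solution n x a nu alpha C y \<longleftrightarrow> 0 < C \<and> interlacing y \<and> (\<forall>j\<le>n. ln C + logS y j = ln (alpha j))"
proof -
  have "(\<forall>j<n. x j < y (j + 1) \<and> y (j + 1) < x (j + 1)) \<longleftrightarrow> interlacing y"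
    unfolding interlacing_def
  proof (intro iffI ballI allI impI)
    fix k assume "\<forall>j<n. x j < y (j + 1) \<and> y (j + 1) < x (j + 1)" "k \<in> {1..n}"
    then show "x (k - 1) < y k \<and> y k < x k"
      by (cases k) auto
  next
    fix j assume "\<forall>k\<in>{1..n}. x (k - 1) < y k \<and> y k < x k" "j < n"
    then show "x j < y (j + 1) \<and> y (j + 1) < x (j + 1)"
      by (metis Suc_eq_plus1 Suc_leI atLeastAtMost_iff diff_Suc_1 le_add2)
  qed
  moreover have "C * exp (logS y j) = alpha j \<longleftrightarrow> ln C + logS y j = ln (alpha j)"
    if "0 < C" "j \<le> n" for j
  proof -
    have "C * exp (logS y j) = alpha j \<longleftrightarrow> ln (C * exp (logS y j)) = ln (alpha j)"
      using that assms by (intro ln_inj_iff[symmetric]) auto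
    then show ?thesis
      using that by (simp add: ln_mult)
  qed
  ultimately show ?thesis
    unfolding is_solution_def by (auto simp: S_fun_at_node)
qed

lemma solution_exists_unique:
  assumes alpha: "\<forall>j\<le>n. 0 < alpha j"
  shows "\<exists>C y. is_solution n x a nu alpha C y \<and>
    (\<forall>C' y'. is_solution n x a nu alpha C' y' \<longrightarrow> C' = C \<and> (\<forall>k\<in>{1..n}. y' k = y k))"
proof -
  define c where "c j = ln (alpha j) - ln (alpha (j - 1))" for j
  have solution_iff: "is_solution n x a nu alpha C y \<longleftrightarrow> 0 < C \<and> interlacing y \<and>
      ln C + logS y 0 = ln (alpha 0) \<and> (\<forall>j\<in>{1..n}. (\<Sum>k = 1..n. logdiff j k (y k)) = c j)" for C y
    unfolding is_solution_iff[OF alpha] sum_logdiff_eq_logS c_def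
      eq_upto_iff_differences[where f = "\<lambda>j. ln C + logS y j" and g = "\<lambda>j. ln (alpha j)"]
    by simp
  obtain y where y: "interlacing y" "\<forall>j\<in>{1..n}. (\<Sum>k = 1..n. logdiff j k (y k)) = c j"
    using exists_log_solution by blast
  define C where "C = exp (ln (alpha 0) - logS y 0)"
  have "is_solution n x a nu alpha C y"
    using y by (simp add: solution_iff C_def)
  moreover have "C' = C \<and> (\<forall>k\<in>{1..n}. y' k = y k)" if "is_solution n x a nu alpha C' y'" for C' y'
  proof -
    have y': "0 < C'" "interlacing y'" "ln C' + logS y' 0 = ln (alpha 0)"
      "\<forall>j\<in>{1..n}. (\<Sum>k = 1..n. logdiff j k (y' k)) = c j"
      using that by (simp_all add: solution_iff)
    then have same: "\<forall>k\<in>{1..n}. y' k = y k"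
      using log_solution_unique[of y y'] y by simp
    then have "logS y' 0 = logS y 0"
      unfolding logS_def by (intro sum.cong) auto
    with y' have "C' = C"
      unfolding C_def by (metis add_diff_cancel_right' exp_ln)
    with same show ?thesis
      by blast
  qed
  ultimately show ?thesis
    by blast
qed

lemma sin_node_power:
  assumes "nu k \<in> \<nat>" "interlacing y" "k \<in> {1..n}" "j \<le> n"
  shows "sin (a k * pi * (x j - y k)) ^ nat \<lfloor>nu k\<rfloor>
    = (if j < k then (-1) ^ nat \<lfloor>nu k\<rfloor> else 1) * \<bar>sin (a k * pi * (x j - y k))\<bar> powr nu k"
proof -
  define s where "s = sin (a k * pi * (x j - y k))"
  obtain m where m: "nu k = real m"
    using assms(1) by (rule Nats_cases)
  have "sgn s = (if j < k then -1 else 1)"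
    using sin_node_pos[OF assms(2,3) _ assms(4)] sin_node_neg[OF assms(2,3)] by (simp add: s_def)
  moreover have "\<bar>s\<bar> powr nu k = \<bar>s\<bar> ^ m"
    using sin_node_nonzero[OF assms(2-4)] m by (simp add: s_def powr_realpow)
  moreover have "s ^ m = sgn s ^ m * \<bar>s\<bar> ^ m"
    by (metis power_mult_distrib sgn_mult_abs)
  ultimately show ?thesis
    by (simp add: m flip: s_def)
qed

lemma T_fun_at_node:
  assumes nat: "\<forall>k\<in>{1..n}. nu k \<in> \<nat>" and y: "interlacing y" and j: "j \<le> n"
  shows "T_fun n C a nu y (x j) = (-1) ^ (\<Sum>k = j + 1..n. nat \<lfloor>nu k\<rfloor>) * S_fun n C a nu y (x j)"
proof -
  have "(\<Prod>k = 1..n. sin (a k * pi * (x j - y k)) ^ nat \<lfloor>nu k\<rfloor>)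
      = (\<Prod>k = 1..n. if j < k then (-1) ^ nat \<lfloor>nu k\<rfloor> else 1)
        * (\<Prod>k = 1..n. \<bar>sin (a k * pi * (x j - y k))\<bar> powr nu k)"
    using sin_node_power[OF _ y _ j] nat by (simp add: prod.distrib[symmetric])
  also have "(\<Prod>k = 1..n. if j < k then (-1) ^ nat \<lfloor>nu k\<rfloor> else 1)
      = (\<Prod>k = j + 1..n. (-1::real) ^ nat \<lfloor>nu k\<rfloor>)"
    by (subst prod.inter_filter[symmetric]) (auto intro!: prod.cong)
  also have "\<dots> = (-1) ^ (\<Sum>k = j + 1..n. nat \<lfloor>nu k\<rfloor>)"
    by (simp add: power_sum)
  finally show ?thesis
    by (simp add: T_fun_def S_fun_def)
qed

end

theorem theorem9p7:
  fixes n :: nat and x nu a alpha :: "nat \<Rightarrow> real"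
  assumes x0: "0 \<le> x 0" and xn: "x n \<le> 1"
    and xinc: "\<forall>j<n. x j < x (j+1)"
    and nupos: "\<forall>k\<in>{1..n}. nu k > 0"
    and arng: "\<forall>k\<in>{1..n}. 0 < a k \<and> a k \<le> 1"
    and alphapos: "\<forall>j\<le>n. alpha j > 0"
    and case_ac: "x n - x 0 < 1 \<or> (\<forall>k\<in>{1..n}. a k < 1)"
  shows "(\<exists>C y. is_solution n x a nu alpha C y \<and>
            (\<forall>C' y'. is_solution n x a nu alpha C' y' \<longrightarrow> C' = C \<and> (\<forall>k\<in>{1..n}. y' k = y k)))
       \<and> ((\<forall>k\<in>{1..n}. nu k \<in> \<nat>) \<longrightarrow>
            (\<forall>C y. is_solution n x a nu alpha C y \<longrightarrow>
              (\<forall>j\<le>n. T_fun n C a nu y (x j) = (-1) ^ (\<Sum>k = j+1..n. nat \<lfloor>nu k\<rfloor>) * alpha j)))"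
proof -
  have "a k * (x n - x 0) < 1" if "k \<in> {1..n}" for k
  proof -
    have "0 < a k" "a k \<le> 1" "x n - x 0 \<le> 1" "x n - x 0 < 1 \<or> a k < 1"
      using arng case_ac x0 xn that by auto
    then show ?thesis
      by (smt (verit) mult_le_cancel_left2 mult_le_cancel_right2)
  qed
  then interpret sine_interpolation n x nu a
    using xinc nupos arng by unfold_locales auto
  have "T_fun n C a nu y (x j) = (-1) ^ (\<Sum>k = j + 1..n. nat \<lfloor>nu k\<rfloor>) * alpha j"
    if "\<forall>k\<in>{1..n}. nu k \<in> \<nat>" "is_solution n x a nu alpha C y" "j \<le> n" for C y j
  proof -
    have "interlacing y"
      using that(2) is_solution_iff[OF alphapos] by blast
    moreover have "S_fun n C a nu y (x j) = alpha j"
      using that(2,3) by (simp add: is_solution_def)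
    ultimately show ?thesis
      using that(1,3) by (simp add: T_fun_at_node)
  qed
  with solution_exists_unique[OF alphapos] show ?thesis
    by blast
qed

end
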